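(* For all processes $P,Q$: if $\emptyset\vdash P$ and $P\rightarrow^{\star}Q$, then $Q$ is not an error.
   Context: Let $\mathcal N$ be a countable set of names. Processes are generated by $P,Q ::= 0 \mid P\mid Q \mid (\nu a)P \mid (a)P \mid \alpha.P$, where $(\nu a)P$ is name restriction (binding $a$), $(a)P$ is the authorization scope ($P$ is authorized to act on $a$; $a$ not bound), and prefixes are $\alpha ::= \overline{a}\langle b\rangle$ (output of $b$ on $a$) $\mid a(x)$ (input on $a$, binding $x$) $\mid \overline{a}\langle\!\langle b\rangle\!\rangle$ (send authorization for $b$ on $a$) $\mid a\langle\!\langle b\rangle\!\rangle$ (receive authorization for $b$ on $a$; $b$ not bound). For a name $a$, $\alpha_a$ denotes any prefix of one of these four forms with subject $a$. $(\vec a)P$ abbreviates $(a_1)\cdots(a_m)P$ (possibly empty). Free names: $\mathrm{fn}(0)=\emptyset$, $\mathrm{fn}(P\mid Q)=\mathrm{fn}(P)\cup\mathrm{fn}(Q)$, $\mathrm{fn}((\nu a)P)=\mathrm{fn}(P)\setminus\{a\}$, $\mathrm{fn}((a)P)=\{a\}\cup\mathrm{fn}(P)$, $\mathrm{fn}(\overline{a}\langle b\rangle.P)=\mathrm{fn}(\overline{a}\langle\!\langle b\rangle\!\rangle.P)=\mathrm{fn}(a\langle\!\langle b\rangle\!\rangle.P)=\{a,b\}\cup\mathrm{fn}(P)$, $\mathrm{fn}(a(x).P)=\{a\}\cup(\mathrm{fn}(P)\setminus\{x\})$. $Q\{c/x\}$ is capture-avoiding substitution. Structural congruence $\equiv$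 is the least congruence satisfying: $P\mid 0\equiv P$; $P\mid Q\equiv Q\mid P$; $(P\mid Q)\mid R\equiv P\mid(Q\mid R)$; $(\nu a)0\equiv 0$; $(\nu a)(\nu b)P\equiv(\nu b)(\nu a)P$; $P\mid(\nu a)Q\equiv(\nu a)(P\mid Q)$ if $a\notin\mathrm{fn}(P)$; $\alpha$-convertible processes are congruent; $(a)(b)P\equiv(b)(a)P$; $(a)0\equiv 0$; $(a)(P\mid Q)\equiv(a)P\mid(a)Q$; $(a)(\nu b)P\equiv(\nu b)(a)P$ if $a\neq b$. Reduction $\rightarrow$ is the least relation such that: (comm) $(\vec a_1)(b)\overline{b}\langle c\rangle.P\mid(\vec a_2)(b)b(x).Q\rightarrow(\vec a_1)(b)P\mid(\vec a_2)(b)Q\{c/x\}$; (auth) $(\vec a_1)(b)(c)\overline{b}\langle\!\langle c\rangle\!\rangle.P\mid(\vec a_2)(b)b\langle\!\langle c\rangle\!\rangle.Q\rightarrow(\vec a_1)(b)P\mid(\vec a_2)(b)(c)Q$; if $P\rightarrow Q$ then $P\mid R\rightarrow Q\mid R$, $(\nu a)P\rightarrow(\nu a)Q$ and $(a)P\rightarrow(a)Q$; and if $P\equiv P'\rightarrow Q'\equiv Q$ then $P\rightarrow Q$. $\rightarrow^{\star}$ is the reflexive–transitive closure of $\rightarrow$. Active contexts: $\mathcal C[\cdot] ::= \cdot \mid P\mid\mathcal C[\cdot] \mid (\nu a)\mathcal C[\cdot] \mid (a)\mathcal C[\cdot]$. The predicate $\mathrm{auth}(\mathcal C[\cdot],a)$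 is: $\mathit{false}$ if $\mathcal C[\cdot]=\cdot$; $\mathit{true}$ if $\mathcal C[\cdot]=(a)\mathcal C'[\cdot]$; $\mathrm{auth}(\mathcal C'[\cdot],a)$ if $\mathcal C[\cdot]$ is $(b)\mathcal C'[\cdot]$ with $a\neq b$, $P\mid\mathcal C'[\cdot]$, or $(\nu b)\mathcal C'[\cdot]$. A process $P$ is an error if $P\equiv\mathcal C[\alpha_a.Q]$ for some active context $\mathcal C[\cdot]$, name $a$, prefix $\alpha_a$ and process $Q$ such that either $\mathrm{auth}(\mathcal C[\cdot],a)=\mathit{false}$, or $\alpha_a=\overline{a}\langle\!\langle b\rangle\!\rangle$ and $\mathrm{auth}(\mathcal C[\cdot],b)=\mathit{false}$. The typing judgment $\rho\vdash P$ ($\rho$ a set of names) is the least relation closed under the rules: $\emptyset\vdash 0$; if $\rho_1\vdash P$ and $\rho_2\vdash Q$ then $\rho_1\cup\rho_2\vdash P\mid Q$; if $\rho\vdash P$ and $a\notin\rho$ then $\rho\vdash(\nu a)P$; if $\rho\vdash P$ then $\rho\setminus\{a\}\vdash(a)P$; if $\rho\vdash P$ then $\rho\cup\{a\}\vdash\overline{a}\langle b\rangle.P$; if $\rho\vdash P$ and $x\notin\rho$ then $\rho\cup\{a\}\vdash a(x).P$; if $\rho\vdash P$ and $b\notin\rho$ then $\rho\cup\{a,b\}\vdash\overline{a}\langle\!\langle b\rangle\!\rangle.P$; if $\rho\vdash P$ then $(\rho\setminus\{b\})\cup\{a\}\vdash a\langle\!\langle b\rangle\!\rangle.P$. *)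

theory Defs
  imports Main
begin

type_synonym name = nat

datatype prefix =
    Out name name      (* output of b on a:  a<b> *)
  | In name name       (* input on a binding x: a(x) *)
  | AOut name name     (* send authorization for b on a *)
  | AIn name name      (* receive authorization for b on a *)

datatype proc =
    Nil
  | Par proc proc
  | Res name proc
  | Auth name proc
  | Pre prefix proc

fun subj :: "prefix \<Rightarrow> name" where
  "subj (Out a b) = a" | "subj (In a x) = a" | "subj (AOut a b) = a" | "subj (AIn a b) = a"

definition auths :: "name list \<Rightarrow> proc \<Rightarrow> proc" where
  "auths as P = foldr Auth as P"

primrec fn :: "proc \<Rightarrow> name set" where
  "fn Nil = {}"
| "fn (Par P Q) = fn P \<union> fn Q"
| "fn (Res a P) = fn P - {a}"
| "fn (Auth a P) = insert a (fn P)"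
| "fn (Pre \<alpha> P) = (case \<alpha> of
      Out a b \<Rightarrow> {a, b} \<union> fn P
    | In a x \<Rightarrow> insert a (fn P - {x})
    | AOut a b \<Rightarrow> {a, b} \<union> fn P
    | AIn a b \<Rightarrow> {a, b} \<union> fn P)"

primrec names :: "proc \<Rightarrow> name set" where
  "names Nil = {}"
| "names (Par P Q) = names P \<union> names Q"
| "names (Res a P) = insert a (names P)"
| "names (Auth a P) = insert a (names P)"
| "names (Pre \<alpha> P) = (case \<alpha> of
      Out a b \<Rightarrow> {a, b} \<union> names P
    | In a x \<Rightarrow> {a, x} \<union> names P
    | AOut a b \<Rightarrow> {a, b} \<union> names P
    | AIn a b \<Rightarrow> {a, b} \<union> names P)"

lemma finite_names: "finite (names P)"
  by (induction P) (auto split: prefix.split)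

definition swn :: "name \<Rightarrow> name \<Rightarrow> name \<Rightarrow> name" where
  "swn a b n = (if n = a then b else if n = b then a else n)"

fun swp :: "name \<Rightarrow> name \<Rightarrow> prefix \<Rightarrow> prefix" where
  "swp a b (Out c d) = Out (swn a b c) (swn a b d)"
| "swp a b (In c d) = In (swn a b c) (swn a b d)"
| "swp a b (AOut c d) = AOut (swn a b c) (swn a b d)"
| "swp a b (AIn c d) = AIn (swn a b c) (swn a b d)"

primrec swap :: "name \<Rightarrow> name \<Rightarrow> proc \<Rightarrow> proc" where
  "swap a b Nil = Nil"
| "swap a b (Par P Q) = Par (swap a b P) (swap a b Q)"
| "swap a b (Res c P) = Res (swn a b c) (swap a b P)"
| "swap a b (Auth c P) = Auth (swn a b c) (swap a b P)"
| "swap a b (Pre \<alpha> P) = Pre (swp a b \<alpha>) (swap a b P)"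

primrec psize :: "proc \<Rightarrow> nat" where
  "psize Nil = 0"
| "psize (Par P Q) = Suc (psize P + psize Q)"
| "psize (Res a P) = Suc (psize P)"
| "psize (Auth a P) = Suc (psize P)"
| "psize (Pre \<alpha> P) = Suc (psize P)"

lemma psize_swap[simp]: "psize (swap a b P) = psize P"
  by (induction P) auto

definition fresh :: "name set \<Rightarrow> name" where
  "fresh S = Suc (Max (insert 0 S))"

definition ren :: "name \<Rightarrow> name \<Rightarrow> name \<Rightarrow> name" where
  "ren x c n = (if n = x then c else n)"

text \<open>Capture-avoiding substitution  subst Q x c = Q{c/x}.
  Bound names clashing with c are renamed to a fresh name.\<close>
function subst :: "proc \<Rightarrow> name \<Rightarrow> name \<Rightarrow> proc" where
  "subst Nil x c = Nil"
| "subst (Par P Q) x c = Par (subst P x c) (subst Q x c)"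
| "subst (Res a P) x c =
     (if a = x then Res a P
      else if a = c then
        (let b = fresh (insert x (insert c (names P))) in Res b (subst (swap a b P) x c))
      else Res a (subst P x c))"
| "subst (Auth a P) x c = Auth (ren x c a) (subst P x c)"
| "subst (Pre (Out a b) P) x c = Pre (Out (ren x c a) (ren x c b)) (subst P x c)"
| "subst (Pre (AOut a b) P) x c = Pre (AOut (ren x c a) (ren x c b)) (subst P x c)"
| "subst (Pre (AIn a b) P) x c = Pre (AIn (ren x c a) (ren x c b)) (subst P x c)"
| "subst (Pre (In a y) P) x c =
     (if y = x then Pre (In (ren x c a) y) P
      else if y = c then
        (let b = fresh (insert x (insert c (names P))) in
           Pre (In (ren x c a) b) (subst (swap y b P) x c))
      else Pre (In (ren x c a) y) (subst P x c))"
  by pat_completeness auto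
termination
  by (relation "measure (\<lambda>(P, x, c). psize P)") auto

inductive scong :: "proc \<Rightarrow> proc \<Rightarrow> bool" (infix "\<equiv>\<^sub>s" 50) where
  refl: "P \<equiv>\<^sub>s P"
| sym: "P \<equiv>\<^sub>s Q \<Longrightarrow> Q \<equiv>\<^sub>s P"
| trans: "P \<equiv>\<^sub>s Q \<Longrightarrow> Q \<equiv>\<^sub>s R \<Longrightarrow> P \<equiv>\<^sub>s R"
| cPar: "P \<equiv>\<^sub>s P' \<Longrightarrow> Q \<equiv>\<^sub>s Q' \<Longrightarrow> Par P Q \<equiv>\<^sub>s Par P' Q'"
| cRes: "P \<equiv>\<^sub>s P' \<Longrightarrow> Res a P \<equiv>\<^sub>s Res a P'"
| cAuth: "P \<equiv>\<^sub>s P' \<Longrightarrow> Auth a P \<equiv>\<^sub>s Auth a P'"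
| cPre: "P \<equiv>\<^sub>s P' \<Longrightarrow> Pre \<alpha> P \<equiv>\<^sub>s Pre \<alpha> P'"
| par_nil: "Par P Nil \<equiv>\<^sub>s P"
| par_comm: "Par P Q \<equiv>\<^sub>s Par Q P"
| par_assoc: "Par (Par P Q) R \<equiv>\<^sub>s Par P (Par Q R)"
| res_nil: "Res a Nil \<equiv>\<^sub>s Nil"
| res_comm: "Res a (Res b P) \<equiv>\<^sub>s Res b (Res a P)"
| scope_ext: "a \<notin> fn P \<Longrightarrow> Par P (Res a Q) \<equiv>\<^sub>s Res a (Par P Q)"
| alpha_res: "b \<notin> fn P \<Longrightarrow> Res a P \<equiv>\<^sub>s Res b (swap a b P)"
| alpha_in: "y \<notin> fn P \<Longrightarrow> Pre (In a x) P \<equiv>\<^sub>s Pre (In a y) (swap x y P)"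
| auth_comm: "Auth a (Auth b P) \<equiv>\<^sub>s Auth b (Auth a P)"
| auth_nil: "Auth a Nil \<equiv>\<^sub>s Nil"
| auth_par: "Auth a (Par P Q) \<equiv>\<^sub>s Par (Auth a P) (Auth a Q)"
| auth_res: "a \<noteq> b \<Longrightarrow> Auth a (Res b P) \<equiv>\<^sub>s Res b (Auth a P)"

inductive red :: "proc \<Rightarrow> proc \<Rightarrow> bool" (infix "\<longrightarrow>\<^sub>r" 50) where
  comm: "Par (auths as1 (Auth b (Pre (Out b c) P))) (auths as2 (Auth b (Pre (In b x) Q)))
         \<longrightarrow>\<^sub>r Par (auths as1 (Auth b P)) (auths as2 (Auth b (subst Q x c)))"
| auth: "Par (auths as1 (Auth b (Auth c (Pre (AOut b c) P)))) (auths as2 (Auth b (Pre (AIn b c) Q)))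
         \<longrightarrow>\<^sub>r Par (auths as1 (Auth b P)) (auths as2 (Auth b (Auth c Q)))"
| par: "P \<longrightarrow>\<^sub>r Q \<Longrightarrow> Par P R \<longrightarrow>\<^sub>r Par Q R"
| res: "P \<longrightarrow>\<^sub>r Q \<Longrightarrow> Res a P \<longrightarrow>\<^sub>r Res a Q"
| aut: "P \<longrightarrow>\<^sub>r Q \<Longrightarrow> Auth a P \<longrightarrow>\<^sub>r Auth a Q"
| struct: "P \<equiv>\<^sub>s P' \<Longrightarrow> P' \<longrightarrow>\<^sub>r Q' \<Longrightarrow> Q' \<equiv>\<^sub>s Q \<Longrightarrow> P \<longrightarrow>\<^sub>r Q"

datatype ctx = Hole | CPar proc ctx | CRes name ctx | CAuth name ctx

primrec fill :: "ctx \<Rightarrow> proc \<Rightarrow> proc" where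
  "fill Hole R = R"
| "fill (CPar P C) R = Par P (fill C R)"
| "fill (CRes a C) R = Res a (fill C R)"
| "fill (CAuth a C) R = Auth a (fill C R)"

primrec auth :: "ctx \<Rightarrow> name \<Rightarrow> bool" where
  "auth Hole a = False"
| "auth (CAuth b C) a = (if b = a then True else auth C a)"
| "auth (CPar P C) a = auth C a"
| "auth (CRes b C) a = auth C a"

definition error :: "proc \<Rightarrow> bool" where
  "error P \<longleftrightarrow> (\<exists>C a \<alpha> Q. P \<equiv>\<^sub>s fill C (Pre \<alpha> Q) \<and> subj \<alpha> = a \<and>
      (\<not> auth C a \<or> (\<exists>b. \<alpha> = AOut a b \<and> \<not> auth C b)))"

inductive typed :: "name set \<Rightarrow> proc \<Rightarrow> bool" ("_ \<turnstile> _" [50, 50] 50) where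
  t_nil: "{} \<turnstile> Nil"
| t_par: "\<rho>1 \<turnstile> P \<Longrightarrow> \<rho>2 \<turnstile> Q \<Longrightarrow> \<rho>1 \<union> \<rho>2 \<turnstile> Par P Q"
| t_res: "\<rho> \<turnstile> P \<Longrightarrow> a \<notin> \<rho> \<Longrightarrow> \<rho> \<turnstile> Res a P"
| t_auth: "\<rho> \<turnstile> P \<Longrightarrow> \<rho> - {a} \<turnstile> Auth a P"
| t_out: "\<rho> \<turnstile> P \<Longrightarrow> insert a \<rho> \<turnstile> Pre (Out a b) P"
| t_in: "\<rho> \<turnstile> P \<Longrightarrow> x \<notin> \<rho> \<Longrightarrow> insert a \<rho> \<turnstile> Pre (In a x) P"
| t_aout: "\<rho> \<turnstile> P \<Longrightarrow> b \<notin> \<rho> \<Longrightarrow> \<rho> \<union> {a, b} \<turnstile> Pre (AOut a b) P"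
| t_ain: "\<rho> \<turnstile> P \<Longrightarrow> insert a (\<rho> - {b}) \<turnstile> Pre (AIn a b) P"

end

theory Submission
  imports Defs
begin

text \<open>Assign to every process the number of authorizations on each name that it still needs
  from its context, or nothing when a binder captures a name that is still needed. A prefix on
  \<open>a\<close> needs \<open>a\<close>, sending an authorization for \<open>b\<close> needs one more \<open>b\<close>, while a scope \<open>(a)\<close> or a
  received authorization discharges one. Structural congruence preserves this need, reduction
  can only decrease it, and a process typed under the empty set needs nothing. So every
  reachable process needs nothing, whereas an error exposes a prefix whose positive need no
  scope of its active context discharges.\<close>

definition require :: "name \<Rightarrow> (name \<Rightarrow> nat) \<Rightarrow> name \<Rightarrow> nat" where
  "require a r = r(a := max (r a) 1)"

definition grant :: "name \<Rightarrow> (name \<Rightarrow> nat) \<Rightarrow> name \<Rightarrow> nat" where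
  "grant a r = r(a := r a - 1)"

definition spend :: "name \<Rightarrow> (name \<Rightarrow> nat) \<Rightarrow> name \<Rightarrow> nat" where
  "spend a r = r(a := Suc (r a))"

text \<open>Needs are counted rather than recorded as a set because substitution may identify the
  name of a sent authorization with a name that is needed anyway. Parallel components combine
  by maximum since a scope distributes over parallel composition.\<close>

fun need_prefix :: "prefix \<Rightarrow> (name \<Rightarrow> nat) \<Rightarrow> (name \<Rightarrow> nat) option" where
  "need_prefix (Out a b) r = Some (require a r)"
| "need_prefix (In a x) r = (if r x = 0 then Some (require a r) else None)"
| "need_prefix (AOut a b) r = Some (require a (spend b r))"
| "need_prefix (AIn a b) r = Some (require a (grant b r))"

primrec need :: "proc \<Rightarrow> (name \<Rightarrow> nat) option" where
  "need Nil = Some bot"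
| "need (Par P Q) = (case need P of None \<Rightarrow> None | Some r \<Rightarrow>
    (case need Q of None \<Rightarrow> None | Some s \<Rightarrow> Some (sup r s)))"
| "need (Res a P) = (case need P of None \<Rightarrow> None | Some r \<Rightarrow> if r a = 0 then Some r else None)"
| "need (Auth a P) = map_option (grant a) (need P)"
| "need (Pre \<alpha> P) = (case need P of None \<Rightarrow> None | Some r \<Rightarrow> need_prefix \<alpha> r)"

declare sup_nat_def [simp] bot_nat_def [simp]

lemma swn_swn [simp]: "swn a b (swn a b n) = n"
  by (simp add: swn_def)

lemma comp_swn_eq_self: "r a = 0 \<Longrightarrow> r b = 0 \<Longrightarrow> r \<circ> swn a b = (r :: name \<Rightarrow> nat)"
  by (auto simp: fun_eq_iff swn_def)

lemma fresh_notin: "finite S \<Longrightarrow> fresh S \<notin> S"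
proof
  assume "finite S" "fresh S \<in> S"
  then have "fresh S \<le> Max (insert 0 S)" by (intro Max_ge) auto
  then show False by (simp add: fresh_def)
qed

lemma fn_subset_names: "fn P \<subseteq> names P"
  by (induction P) (auto split: prefix.splits)

lemma need_swap: "need (swap a b P) = map_option (\<lambda>r. r \<circ> swn a b) (need P)"
proof (induction P)
  case (Pre \<alpha> P)
  then show ?case
    by (cases \<alpha>) (auto simp: require_def grant_def spend_def fun_eq_iff swn_def split: option.split)
next
  case (Auth c P)
  then show ?case
    by (cases "need P") (auto simp: grant_def fun_eq_iff swn_def)
qed (auto simp: fun_eq_iff split: option.split)

lemma need_in_fn: "need P = Some r \<Longrightarrow> r n \<noteq> 0 \<Longrightarrow> n \<in> fn P"
proof (induction P arbitrary: r)
  case (Pre \<alpha> P)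
  then show ?case
    by (cases \<alpha>) (auto simp: require_def grant_def spend_def split: option.splits if_splits)
qed (auto simp: grant_def max_def split: option.splits if_splits)

lemma need_scong: "P \<equiv>\<^sub>s Q \<Longrightarrow> need P = need Q"
proof (induction rule: scong.induct)
  case (scope_ext a P Q)
  then show ?case using need_in_fn[of P _ a]
    by (auto split: option.splits)
next
  case (alpha_res b P a)
  show ?case
  proof (cases "need P")
    case (Some r)
    with alpha_res have "r b = 0" using need_in_fn by blast
    with Some show ?thesis by (auto simp: need_swap swn_def fun_eq_iff)
  qed (simp add: need_swap)
next
  case (alpha_in y P a x)
  show ?case
  proof (cases "need P")
    case (Some r)
    with alpha_in have "r y = 0" using need_in_fn by blast
    with Some show ?thesis by (auto simp: need_swap swn_def require_def fun_eq_iff)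
  qed (simp add: need_swap)
next
  case (auth_comm a b P)
  then show ?case
    by (cases "a = b") (auto simp: grant_def fun_upd_twist option.map_comp comp_def)
next
  case (auth_par a P Q)
  then show ?case
    by (cases "need P"; cases "need Q") (auto simp: grant_def fun_eq_iff max_def)
next
  case (auth_nil a)
  then show ?case by (simp add: grant_def fun_eq_iff)
qed (auto simp: grant_def sup_commute sup_assoc split: option.splits)

definition subst_need :: "name \<Rightarrow> name \<Rightarrow> (name \<Rightarrow> nat) \<Rightarrow> name \<Rightarrow> nat" where
  "subst_need x c r = (\<lambda>n. (if n = c then r x else 0) + (if n = x then 0 else r n))"

lemma subst_need_other [simp]: "n \<noteq> c \<Longrightarrow> subst_need x c r n = (if n = x then 0 else r n)"
  by (simp add: subst_need_def)

lemma le_subst_need: "r x = 0 \<or> x = c \<Longrightarrow> r \<le> subst_need x c r"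
  by (auto simp: le_fun_def subst_need_def)

lemma subst_need_sup: "sup r' s' \<le> subst_need x c (sup r s)"
  if "r' \<le> subst_need x c r" "s' \<le> subst_need x c s"
proof (rule le_funI)
  fix n
  show "sup r' s' n \<le> subst_need x c (sup r s) n"
    using le_funD[OF that(1), of n] le_funD[OF that(2), of n] by (auto simp: subst_need_def)
qed

lemma subst_need_grant:
  "r' \<le> subst_need x c r \<Longrightarrow> grant (ren x c a) r' \<le> subst_need x c (grant a r)"
  unfolding le_fun_def by (auto simp: subst_need_def grant_def ren_def split: if_splits)

lemma subst_need_require:
  "r' \<le> subst_need x c r \<Longrightarrow> require (ren x c a) r' \<le> subst_need x c (require a r)"
  unfolding le_fun_def by (auto simp: subst_need_def require_def ren_def max_def split: if_splits)

lemma subst_need_spend: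
  "r' \<le> subst_need x c r \<Longrightarrow> spend (ren x c a) r' \<le> subst_need x c (spend a r)"
  unfolding le_fun_def by (auto simp: subst_need_def spend_def ren_def split: if_splits)

lemma fresh_for_subst:
  "b = fresh (insert x (insert c (names P))) \<Longrightarrow> b \<noteq> x \<and> b \<noteq> c \<and> b \<notin> fn P"
  using fresh_notin[of "insert x (insert c (names P))"] finite_names[of P] fn_subset_names[of P]
  by auto

lemma need_subst_fresh_binder:
  assumes P: "need P = Some r" "r c = 0"
    and b: "b = fresh (insert x (insert c (names P)))"
    and IH: "\<exists>r'. need (subst (swap c b P) x c) = Some r' \<and> r' \<le> subst_need x c (r \<circ> swn c b)"
  shows "\<exists>r'. need (subst (swap c b P) x c) = Some r' \<and> r' b = 0 \<and> r' \<le> subst_need x c r"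
proof -
  from b P(1) have "b \<noteq> x" "b \<noteq> c" "r b = 0"
    using fresh_for_subst need_in_fn by blast+
  with P(2) have "r \<circ> swn c b = r"
    by (simp add: comp_swn_eq_self)
  with IH obtain r' where r': "need (subst (swap c b P) x c) = Some r'" "r' \<le> subst_need x c r"
    by auto
  moreover have "r' b = 0"
    using le_funD[OF r'(2), of b] \<open>b \<noteq> x\<close> \<open>b \<noteq> c\<close> \<open>r b = 0\<close> by simp
  ultimately show ?thesis by blast
qed

lemma need_subst: "need Q = Some r \<Longrightarrow> \<exists>r'. need (subst Q x c) = Some r' \<and> r' \<le> subst_need x c r"
proof (induction Q x c arbitrary: r rule: subst.induct)
  case (1 x c)
  then show ?case by (auto simp: le_fun_def subst_need_def)
next
  case (2 P Q x c)
  then obtain rp rq where "need P = Some rp" "need Q = Some rq" "r = sup rp rq"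
    by (auto split: option.splits)
  with 2 show ?case by (fastforce intro: subst_need_sup)
next
  case (3 a P x c)
  from "3.prems" obtain rp where rp: "need P = Some rp" "rp a = 0" "r = rp"
    by (auto split: option.splits if_splits)
  consider "a = x" | "a \<noteq> x" "a = c" | "a \<noteq> x" "a \<noteq> c" by blast
  then show ?case
  proof cases
    case 1
    then show ?thesis using 3 rp le_subst_need[of rp x c] by auto
  next
    case 2
    define b where "b = fresh (insert x (insert c (names P)))"
    have "\<exists>r'. need (subst (swap c b P) x c) = Some r' \<and> r' b = 0 \<and> r' \<le> subst_need x c rp"
      using 2 rp "3.IH"(1)[OF 2 b_def] by (intro need_subst_fresh_binder[OF _ _ b_def]) (auto simp: need_swap)
    then show ?thesis
      using 2 rp by (auto simp: b_def[symmetric] Let_def)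
  next
    case 3
    then obtain r' where r': "need (subst P x c) = Some r'" "r' \<le> subst_need x c rp"
      using "3.IH"(2) rp(1) by blast
    have "r' a = 0" using le_funD[OF r'(2), of a] rp(2) 3 by simp
    then show ?thesis using r' 3 rp by simp
  qed
next
  case (8 a y P x c)
  from "8.prems" obtain rp where rp: "need P = Some rp" "rp y = 0" "r = require a rp"
    by (auto split: option.splits if_splits)
  consider "y = x" | "y \<noteq> x" "y = c" | "y \<noteq> x" "y \<noteq> c" by blast
  then show ?case
  proof cases
    case 1
    then show ?thesis using rp le_subst_need[of rp x c] subst_need_require by auto
  next
    case 2
    define b where "b = fresh (insert x (insert c (names P)))"
    have "\<exists>r'. need (subst (swap c b P) x c) = Some r' \<and> r' b = 0 \<and> r' \<le> subst_need x c rp"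
      using 2 rp "8.IH"(1)[OF 2 b_def] by (intro need_subst_fresh_binder[OF _ _ b_def]) (auto simp: need_swap)
    then show ?thesis
      using 2 rp by (auto simp: b_def[symmetric] Let_def intro: subst_need_require)
  next
    case 3
    then obtain r' where r': "need (subst P x c) = Some r'" "r' \<le> subst_need x c rp"
      using "8.IH"(2) rp(1) by blast
    have "r' y = 0" using le_funD[OF r'(2), of y] rp(2) 3 by simp
    then show ?thesis using r' 3 rp subst_need_require by simp
  qed
qed (auto split: option.splits intro!: subst_need_grant subst_need_require subst_need_spend)

definition need_below :: "proc \<Rightarrow> proc \<Rightarrow> bool" where
  "need_below Q P \<longleftrightarrow> (\<forall>r. need P = Some r \<longrightarrow> (\<exists>r'. need Q = Some r' \<and> r' \<le> r))"

lemma need_below_refl: "need_below P P"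
  by (auto simp: need_below_def)

lemma need_below_trans: "need_below R Q \<Longrightarrow> need_below Q P \<Longrightarrow> need_below R P"
  unfolding need_below_def by (meson order_trans)

lemma need_below_Par:
  assumes "need_below P' P" "need_below Q' Q"
  shows "need_below (Par P' Q') (Par P Q)"
proof (unfold need_below_def, intro allI impI)
  fix r assume "need (Par P Q) = Some r"
  then obtain rp rq where "need P = Some rp" "need Q = Some rq" "r = sup rp rq"
    by (auto split: option.splits)
  with assms show "\<exists>r'. need (Par P' Q') = Some r' \<and> r' \<le> r"
    unfolding need_below_def by (fastforce intro: sup_mono)
qed

lemma need_below_Res:
  assumes "need_below P' P"
  shows "need_below (Res a P') (Res a P)"
proof (unfold need_below_def, intro allI impI)
  fix r assume "need (Res a P) = Some r"
  then have "need P = Some r" "r a = 0"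
    by (auto split: option.splits if_splits)
  with assms obtain r' where "need P' = Some r'" "r' \<le> r"
    unfolding need_below_def by blast
  moreover from \<open>r' \<le> r\<close> \<open>r a = 0\<close> have "r' a = 0"
    using le_funD[of r' r a] by simp
  ultimately show "\<exists>r'. need (Res a P') = Some r' \<and> r' \<le> r"
    by simp
qed

lemma grant_mono: "r \<le> s \<Longrightarrow> grant a r \<le> grant a s"
  by (auto simp: le_fun_def grant_def diff_le_mono)

lemma need_below_Auth:
  assumes "need_below P' P"
  shows "need_below (Auth a P') (Auth a P)"
proof (unfold need_below_def, intro allI impI)
  fix r assume "need (Auth a P) = Some r"
  then obtain rp where "need P = Some rp" "r = grant a rp"
    by auto
  with assms obtain r' where "need P' = Some r'" "r' \<le> rp"
    unfolding need_below_def by blast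
  with \<open>r = grant a rp\<close> show "\<exists>r'. need (Auth a P') = Some r' \<and> r' \<le> r"
    by (simp add: grant_mono)
qed

lemma need_below_auths: "need_below P' P \<Longrightarrow> need_below (auths as P') (auths as P)"
  by (induction as) (simp_all add: auths_def need_below_Auth)

lemma need_below_output: "need_below P (Pre (Out b c) P)"
  by (auto simp: need_below_def le_fun_def require_def split: option.splits)

lemma need_below_input_subst: "need_below (subst Q x c) (Pre (In b x) Q)"
proof (unfold need_below_def, intro allI impI)
  fix r assume "need (Pre (In b x) Q) = Some r"
  then obtain rq where rq: "need Q = Some rq" "rq x = 0" "r = require b rq"
    by (auto split: option.splits if_splits)
  then obtain r' where "need (subst Q x c) = Some r'" "r' \<le> subst_need x c rq"
    using need_subst by blast
  moreover have "subst_need x c rq \<le> r"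
    using rq(2,3) by (auto simp: le_fun_def subst_need_def require_def)
  ultimately show "\<exists>r'. need (subst Q x c) = Some r' \<and> r' \<le> r"
    by (blast intro: order_trans)
qed

lemma need_below_send_auth: "need_below P (Auth c (Pre (AOut b c) P))"
  by (auto simp: need_below_def le_fun_def require_def grant_def spend_def split: option.splits)

lemma need_below_receive_auth: "need_below (Auth c Q) (Pre (AIn b c) Q)"
  by (auto simp: need_below_def le_fun_def require_def grant_def split: option.splits)

lemma need_below_red: "P \<longrightarrow>\<^sub>r Q \<Longrightarrow> need_below Q P"
proof (induction rule: red.induct)
  case comm
  then show ?case
    by (intro need_below_Par need_below_auths need_below_Auth need_below_output need_below_input_subst)
next
  case auth
  then show ?case
    by (intro need_below_Par need_below_auths need_below_Auth need_below_send_auth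
        need_below_receive_auth)
next
  case par
  then show ?case by (simp add: need_below_Par need_below_refl)
next
  case (struct P P' Q' Q)
  then have "need P = need P'" "need Q' = need Q"
    using need_scong by blast+
  with struct.IH show ?case
    by (simp add: need_below_def)
qed (simp_all add: need_below_Res need_below_Auth)

lemma need_below_reduces: "red\<^sup>*\<^sup>* P Q \<Longrightarrow> need_below Q P"
  by (induction rule: rtranclp_induct) (auto intro: need_below_refl need_below_trans need_below_red)

lemma need_typed: "\<rho> \<turnstile> P \<Longrightarrow> need P = Some (\<lambda>n. of_bool (n \<in> \<rho>))"
  by (induction rule: typed.induct) (auto simp: fun_eq_iff require_def grant_def spend_def)

lemma need_fill:
  "need (fill C R) = Some r \<Longrightarrow> \<exists>s. need R = Some s \<and> (\<forall>n. \<not> auth C n \<longrightarrow> s n \<le> r n)"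
proof (induction C arbitrary: r)
  case (CPar P C)
  then show ?case by (fastforce split: option.splits)
next
  case (CRes a C)
  then show ?case by (auto split: option.splits if_splits)
next
  case (CAuth a C)
  then show ?case by (fastforce simp: grant_def)
qed simp

lemma need_Pre_positive:
  "need (Pre \<alpha> R) = Some s \<Longrightarrow> 0 < s (subj \<alpha>) \<and> (\<forall>a b. \<alpha> = AOut a b \<longrightarrow> 0 < s b)"
  by (cases \<alpha>) (auto simp: require_def spend_def split: option.splits if_splits)

lemma not_error_if_need_bot: "need Q = Some bot \<Longrightarrow> \<not> error Q"
proof
  assume "need Q = Some bot" "error Q"
  then obtain C \<alpha> R where C: "need (fill C (Pre \<alpha> R)) = Some bot"
    and unauth: "\<not> auth C (subj \<alpha>) \<or> (\<exists>b. \<alpha> = AOut (subj \<alpha>) b \<and> \<not> auth C b)"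
    unfolding error_def using need_scong by metis
  from need_fill[OF C] obtain s where "need (Pre \<alpha> R) = Some s" "\<forall>n. \<not> auth C n \<longrightarrow> s n = 0"
    by auto
  with unauth show False
    using need_Pre_positive by fastforce
qed

theorem mainTheorem8:
  assumes "{} \<turnstile> P" and "red\<^sup>*\<^sup>* P Q"
  shows "\<not> error Q"
proof -
  have "need P = Some bot"
    using need_typed[OF assms(1)] by (simp add: fun_eq_iff)
  with need_below_reduces[OF assms(2)] have "need Q = Some bot"
    unfolding need_below_def by (auto simp: le_bot)
  then show ?thesis
    by (rule not_error_if_need_bot)
qed

end
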